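(* Let $k_1<k_2$ be integers with $k_1\ge 3$, and let $n$ be a positive integer. If $\nu_{k_1}(n)>0$, then $\nu_{k_2}(n+k_2-k_1)>0$.
   Context: For an integer $k\ge 3$ and a positive integer $n$, $\nu_k(n)$ denotes the number of $k$-tuples of integers $(x_1,\dots,x_k)$ with $1\le x_1\le x_2\le\dots\le x_k$ such that $x_1x_2\cdots x_k+x_1+x_2+\dots+x_k=n$. *)

theory Defs
  imports Main
begin

definition nu_tuples :: "nat \<Rightarrow> int \<Rightarrow> int list set" where
  "nu_tuples k n = {xs. length xs = k \<and> sorted xs \<and> (\<forall>x\<in>set xs. 1 \<le> x)
                        \<and> prod_list xs + sum_list xs = n}"

definition nu :: "nat \<Rightarrow> int \<Rightarrow> nat" where
  "nu k n = card (nu_tuples k n)"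

end

theory Submission
  imports Defs
begin

text \<open>Prepending ones to a solution keeps the list sorted, leaves the product unchanged and
  raises the sum by the number of ones added; hence a solution of length \<open>k\<^sub>1\<close> for \<open>n\<close> yields
  one of length \<open>k\<^sub>2\<close> for \<open>n + k\<^sub>2 - k\<^sub>1\<close>.\<close>

lemma prod_list_ge_1:
  fixes xs :: "'a::linordered_nonzero_semiring list"
  assumes "\<forall>x\<in>set xs. 1 \<le> x"
  shows "1 \<le> prod_list xs"
  using assms
proof (induction xs)
  case (Cons a xs)
  then have "1 * 1 \<le> a * prod_list xs"
    by (intro mult_mono') auto
  then show ?case by simp
qed simp

lemma member_le_sum_list:
  fixes xs :: "'a::ordered_comm_monoid_add list"
  assumes "\<forall>x\<in>set xs. 0 \<le> x" and "y \<in> set xs"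
  shows "y \<le> sum_list xs"
  using assms
proof (induction xs)
  case (Cons a xs)
  have "0 \<le> sum_list xs" using Cons.prems(1) by (intro sum_list_nonneg) auto
  then show ?case using Cons by (auto intro: add_increasing add_increasing2)
qed simp

text \<open>Needed because \<open>nu\<close> is a cardinality, which is \<open>0\<close> on infinite sets; every entry
  lies in \<open>{1..n}\<close>, being bounded by the sum.\<close>

lemma finite_nu_tuples: "finite (nu_tuples k n)"
proof (rule finite_subset)
  show "nu_tuples k n \<subseteq> {xs. set xs \<subseteq> {1..n} \<and> length xs = k}"
  proof
    fix xs assume "xs \<in> nu_tuples k n"
    then have xs: "length xs = k" "\<forall>x\<in>set xs. 1 \<le> x" "prod_list xs + sum_list xs = n"
      by (auto simp: nu_tuples_def)
    have "1 \<le> prod_list xs" using prod_list_ge_1 xs(2) .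
    moreover have "y \<le> sum_list xs" if "y \<in> set xs" for y
      using member_le_sum_list[of xs y] xs(2) that by force
    ultimately show "xs \<in> {xs. set xs \<subseteq> {1..n} \<and> length xs = k}" using xs by force
  qed
  show "finite {xs. set xs \<subseteq> {1..n} \<and> length xs = k}"
    by (rule finite_lists_length_eq) simp
qed

lemma nu_pos_iff: "nu k n > 0 \<longleftrightarrow> nu_tuples k n \<noteq> {}"
  unfolding nu_def using finite_nu_tuples by (simp add: card_gt_0_iff)

lemma replicate_ones_append_in_nu_tuples:
  assumes "xs \<in> nu_tuples k n"
  shows "replicate m 1 @ xs \<in> nu_tuples (m + k) (n + int m)"
  using assms by (auto simp: nu_tuples_def sorted_append sum_list_replicate)

theorem proposition3:
  fixes k1 k2 :: nat and n :: int
  assumes "3 \<le> k1" and "k1 < k2" and "0 < n"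
    and "nu k1 n > 0"
  shows "nu k2 (n + int k2 - int k1) > 0"
proof -
  from assms(4) obtain xs where "xs \<in> nu_tuples k1 n"
    by (auto simp: nu_pos_iff)
  then have "replicate (k2 - k1) 1 @ xs \<in> nu_tuples (k2 - k1 + k1) (n + int (k2 - k1))"
    by (rule replicate_ones_append_in_nu_tuples)
  moreover have "k2 - k1 + k1 = k2" and "n + int (k2 - k1) = n + int k2 - int k1"
    using assms(2) by simp_all
  ultimately show ?thesis
    by (auto simp: nu_pos_iff algebra_simps)
qed

end
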